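(* Let $P$ be a finite set of points in the plane in general position with $|P|$ even, and let $A\subseteq P$ be the union of the vertex sets of some connected components of the underlying graph of $P$. If $a,b\in A$ and the line through $a$ and $b$ is a halving line of $P$, then the two open half-planes determined by this line contain equally many points of $A$.
   Context: Points are in general position if no three are collinear. For a finite set $P$ of $n$ points in general position with $n$ even, a halving line of $P$ is a line through two points of $P$ that has exactly $(n-2)/2$ points of $P$ strictly on each side. The underlying graph of $P$ has vertex set $P$, and two points are adjacent if and only if the line through them is a halving line of $P$. *)

theory Defs
  imports Complex_Main
begin

type_synonym point = "real \<times> real"

text \<open>Orientation (signed doubled area) of the triangle a b c; its sign tells on which
  side of the line through a and b the point c lies (0 = on the line).\<close>
definition orient :: "point \<Rightarrow> point \<Rightarrow> point \<Rightarrow> real" where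
  "orient a b c = (fst b - fst a) * (snd c - snd a) - (snd b - snd a) * (fst c - fst a)"

definition collinear3 :: "point \<Rightarrow> point \<Rightarrow> point \<Rightarrow> bool" where
  "collinear3 a b c \<longleftrightarrow> orient a b c = 0"

definition general_position :: "point set \<Rightarrow> bool" where
  "general_position P \<longleftrightarrow>
     (\<forall>a\<in>P. \<forall>b\<in>P. \<forall>c\<in>P. a \<noteq> b \<and> a \<noteq> c \<and> b \<noteq> c \<longrightarrow> \<not> collinear3 a b c)"

definition left_side :: "point set \<Rightarrow> point \<Rightarrow> point \<Rightarrow> point set" where
  "left_side S a b = {p \<in> S. orient a b p > 0}"

definition right_side :: "point set \<Rightarrow> point \<Rightarrow> point \<Rightarrow> point set" where
  "right_side S a b = {p \<in> S. orient a b p < 0}"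

definition halving_line :: "point set \<Rightarrow> point \<Rightarrow> point \<Rightarrow> bool" where
  "halving_line P a b \<longleftrightarrow> a \<in> P \<and> b \<in> P \<and> a \<noteq> b \<and>
     card (left_side P a b) = (card P - 2) div 2 \<and>
     card (right_side P a b) = (card P - 2) div 2"

definition ug_adj :: "point set \<Rightarrow> point \<Rightarrow> point \<Rightarrow> bool" where
  "ug_adj P a b \<longleftrightarrow> halving_line P a b"

definition ug_component :: "point set \<Rightarrow> point \<Rightarrow> point set" where
  "ug_component P v = {w \<in> P. (ug_adj P)\<^sup>*\<^sup>* v w}"

definition ug_components :: "point set \<Rightarrow> point set set" where
  "ug_components P = ug_component P ` P"

end

theory Submission
  imports Defs
begin

text \<open>Let N = |P|/2 and rotate the direction of a line from that of ab through the angle pi.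
  For each direction, weigh every point of P by how much it lies among the N highest points of P
  measured perpendicular to that direction, where two points tied for the N-th place get one half
  each, and add up the weights of the points of A. This sum can only change when two points swap
  at the N-th place, i.e. when they are tied there; then the line through them is a halving line,
  so both points lie in A or neither does, and the swap does not change the sum. At the start the
  sum is the number of points of A to the left of ab plus the two halves of a and b, at the end
  it is the number of points of A to the right of ab plus one.\<close>

section \<open>Weighted count of the top points in an order\<close>

definition rank_above :: "point set \<Rightarrow> (point \<Rightarrow> real) \<Rightarrow> point \<Rightarrow> nat" where
  "rank_above P f p = card {x\<in>P. f p < f x}"

definition rank_atleast :: "point set \<Rightarrow> (point \<Rightarrow> real) \<Rightarrow> point \<Rightarrow> nat" where
  "rank_atleast P f p = card {x\<in>P. f p \<le> f x}"

text \<open>How much of p lies among the N highest points of P in the order given by f: the value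
  1/2 is taken by each of two tied points competing for the N-th place.\<close>
definition top_weight :: "point set \<Rightarrow> nat \<Rightarrow> (point \<Rightarrow> real) \<Rightarrow> point \<Rightarrow> real" where
  "top_weight P N f p =
     (if rank_atleast P f p \<le> N then 1 else if rank_above P f p < N then 1/2 else 0)"

lemma rank_refine:
  fixes f f0 :: "point \<Rightarrow> real"
  assumes "finite P" "p \<in> P"
    and refines: "\<And>x y. x \<in> P \<Longrightarrow> y \<in> P \<Longrightarrow> f0 x < f0 y \<Longrightarrow> f x < f y"
  shows "rank_above P f p = rank_above P f0 p + card {x\<in>P. f0 x = f0 p \<and> f p < f x}"
    and "rank_atleast P f p = rank_above P f0 p + card {x\<in>P. f0 x = f0 p \<and> f p \<le> f x}"
proof -
  have above: "{x\<in>P. f p < f x} = {x\<in>P. f0 p < f0 x} \<union> {x\<in>P. f0 x = f0 p \<and> f p < f x}"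
    using refines[OF _ \<open>p \<in> P\<close>] refines[OF \<open>p \<in> P\<close>]
    by (auto, metis not_less_iff_gr_or_eq order.asym)
  have atleast: "{x\<in>P. f p \<le> f x} = {x\<in>P. f0 p < f0 x} \<union> {x\<in>P. f0 x = f0 p \<and> f p \<le> f x}"
    using refines[OF _ \<open>p \<in> P\<close>] refines[OF \<open>p \<in> P\<close>]
    by (auto, metis not_less_iff_gr_or_eq not_le, fastforce)
  show "rank_above P f p = rank_above P f0 p + card {x\<in>P. f0 x = f0 p \<and> f p < f x}"
    unfolding rank_above_def above using \<open>finite P\<close> by (subst card_Un_disjoint) auto
  show "rank_atleast P f p = rank_above P f0 p + card {x\<in>P. f0 x = f0 p \<and> f p \<le> f x}"
    unfolding rank_atleast_def rank_above_def atleast using \<open>finite P\<close> by (subst card_Un_disjoint) auto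
qed

lemma top_weight_refine_untied:
  fixes f f0 :: "point \<Rightarrow> real"
  assumes "finite P" "p \<in> P"
    and refines: "\<And>x y. x \<in> P \<Longrightarrow> y \<in> P \<Longrightarrow> f0 x < f0 y \<Longrightarrow> f x < f y"
    and untied: "\<And>x. x \<in> P \<Longrightarrow> f0 x = f0 p \<Longrightarrow> x = p"
  shows "top_weight P N f p = top_weight P N f0 p"
proof -
  have "{x\<in>P. f0 x = f0 p \<and> g p < g x} = {}" for g :: "point \<Rightarrow> real"
    using untied by fastforce
  moreover have "{x\<in>P. f0 x = f0 p \<and> g p \<le> g x} = {p}" for g :: "point \<Rightarrow> real"
    using untied \<open>p \<in> P\<close> by fastforce
  ultimately show ?thesis
    using rank_refine[OF assms(1-3)] rank_refine[of P p f0 f0] assms(1,2)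
    unfolding top_weight_def by simp
qed

lemma top_weight_refine_tied:
  fixes f f0 :: "point \<Rightarrow> real"
  assumes "finite P" "p \<in> P" "q \<in> P" "p \<noteq> q" "f0 q = f0 p" "f q \<noteq> f p"
    and refines: "\<And>x y. x \<in> P \<Longrightarrow> y \<in> P \<Longrightarrow> f0 x < f0 y \<Longrightarrow> f x < f y"
    and tied: "\<And>x. x \<in> P \<Longrightarrow> f0 x = f0 p \<Longrightarrow> x = p \<or> x = q"
  shows "top_weight P N f p - top_weight P N f0 p =
    (if rank_above P f0 p + 1 = N then if f p < f q then - 1/2 else 1/2 else 0)"
proof -
  have "{x\<in>P. f0 x = f0 p \<and> f p < f x} = (if f p < f q then {q} else {})"
    using tied assms(3,5) by (cases "f p < f q") fastforce+
  moreover have "{x\<in>P. f0 x = f0 p \<and> f p \<le> f x} = (if f p < f q then {p, q} else {p})"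
    using tied assms(2,3,5,6) by (cases "f p < f q") fastforce+
  moreover have "{x\<in>P. f0 x = f0 p \<and> f0 p \<le> f0 x} = {p, q}"
    using tied assms(2,3,5) by fastforce
  ultimately show ?thesis
    using rank_refine[OF assms(1,2) refines] rank_refine[of P p f0 f0] assms(1,2,4)
    unfolding top_weight_def by auto
qed

lemma sum_sum_antisym_eq_zero:
  fixes E :: "'a \<Rightarrow> 'a \<Rightarrow> real"
  assumes "\<And>p q. p \<in> A \<Longrightarrow> q \<in> A \<Longrightarrow> E q p = - E p q"
  shows "(\<Sum>p\<in>A. \<Sum>q\<in>A. E p q) = 0"
proof -
  have "(\<Sum>p\<in>A. \<Sum>q\<in>A. E p q) = (\<Sum>q\<in>A. \<Sum>p\<in>A. - E q p)"
    by (subst sum.swap) (intro sum.cong refl assms)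
  then show ?thesis by (simp add: sum_negf)
qed

definition boundary_tie :: "point set \<Rightarrow> nat \<Rightarrow> (point \<Rightarrow> real) \<Rightarrow> point \<Rightarrow> point \<Rightarrow> bool" where
  "boundary_tie P N f0 p q \<longleftrightarrow> q \<noteq> p \<and> f0 q = f0 p \<and> rank_above P f0 p + 1 = N"

text \<open>The change of the weight of p when the tie of p and q at the N-th place in the order f0
  is broken by f.\<close>
definition tie_shift ::
    "point set \<Rightarrow> nat \<Rightarrow> (point \<Rightarrow> real) \<Rightarrow> (point \<Rightarrow> real) \<Rightarrow> point \<Rightarrow> point \<Rightarrow> real" where
  "tie_shift P N f0 f p q =
     (if boundary_tie P N f0 p q then if f p < f q then - 1/2 else 1/2 else 0)"

lemma boundary_tie_sym: "boundary_tie P N f0 q p \<longleftrightarrow> boundary_tie P N f0 p q"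
proof -
  have "f0 q = f0 p \<Longrightarrow> rank_above P f0 q = rank_above P f0 p"
    unfolding rank_above_def by simp
  then show ?thesis unfolding boundary_tie_def by metis
qed

lemma tie_shift_antisym:
  assumes "f q \<noteq> f p"
  shows "tie_shift P N f0 f q p = - tie_shift P N f0 f p q"
  using assms boundary_tie_sym[of P N f0 q p] unfolding tie_shift_def by (cases "f p < f q") simp_all

lemma top_weight_refine_eq_sum_tie_shift:
  fixes f f0 :: "point \<Rightarrow> real"
  assumes "finite P" "A \<subseteq> P" "p \<in> A"
    and refines: "\<And>x y. x \<in> P \<Longrightarrow> y \<in> P \<Longrightarrow> f0 x < f0 y \<Longrightarrow> f x < f y"
    and splits: "\<And>x y. x \<in> P \<Longrightarrow> y \<in> P \<Longrightarrow> x \<noteq> y \<Longrightarrow> f0 x = f0 y \<Longrightarrow> f x \<noteq> f y"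
    and at_most_two: "\<And>x y z. x \<in> P \<Longrightarrow> y \<in> P \<Longrightarrow> z \<in> P \<Longrightarrow> x \<noteq> y \<Longrightarrow>
      f0 y = f0 x \<Longrightarrow> f0 z = f0 x \<Longrightarrow> z = x \<or> z = y"
    and closed: "\<And>x y. x \<in> A \<Longrightarrow> y \<in> P \<Longrightarrow> x \<noteq> y \<Longrightarrow> f0 y = f0 x \<Longrightarrow>
      rank_above P f0 x + 1 = N \<Longrightarrow> y \<in> A"
  shows "top_weight P N f p - top_weight P N f0 p = (\<Sum>q\<in>A. tie_shift P N f0 f p q)"
proof (cases "\<exists>q\<in>P. q \<noteq> p \<and> f0 q = f0 p")
  case False
  have pP: "p \<in> P" using assms(2,3) by blast
  have "top_weight P N f p = top_weight P N f0 p"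
    using top_weight_refine_untied[where f = f and f0 = f0, OF assms(1) pP refines] False by blast
  moreover have "\<not> boundary_tie P N f0 p q" if "q \<in> A" for q
    using False that assms(2) unfolding boundary_tie_def by blast
  ultimately show ?thesis unfolding tie_shift_def by simp
next
  case True
  have pP: "p \<in> P" using assms(2,3) by blast
  obtain q where q: "q \<in> P" "q \<noteq> p" "f0 q = f0 p" using True by blast
  have tied: "\<And>x. x \<in> P \<Longrightarrow> f0 x = f0 p \<Longrightarrow> x = p \<or> x = q"
    using at_most_two[OF pP q(1) _ q(2)[symmetric] q(3)] by blast
  have "\<not> boundary_tie P N f0 p x" if "x \<in> A" "x \<noteq> q" for x
    using tied[of x] that assms(2) unfolding boundary_tie_def by blast
  then have "(\<Sum>x\<in>A. tie_shift P N f0 f p x) = (\<Sum>x\<in>A. if x = q then tie_shift P N f0 f p q else 0)"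
    unfolding tie_shift_def by (intro sum.cong) auto
  also have "\<dots> = tie_shift P N f0 f p q"
  proof -
    have "boundary_tie P N f0 p q \<Longrightarrow> q \<in> A"
      using closed[OF assms(3) q(1) q(2)[symmetric] q(3)] unfolding boundary_tie_def by blast
    moreover have "finite A" using assms(1,2) by (rule rev_finite_subset)
    ultimately show ?thesis unfolding tie_shift_def by simp
  qed
  also have "\<dots> = top_weight P N f p - top_weight P N f0 p"
  proof -
    have "boundary_tie P N f0 p q \<longleftrightarrow> rank_above P f0 p + 1 = N"
      using q(2,3) unfolding boundary_tie_def by blast
    then show ?thesis
      using top_weight_refine_tied[where f = f and f0 = f0, OF assms(1) pP q(1) q(2)[symmetric] q(3)
          splits[OF q(1) pP q(2) q(3)] refines tied]
      unfolding tie_shift_def by presburger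
  qed
  finally show ?thesis by simp
qed

lemma sum_top_weight_refine:
  fixes f f0 :: "point \<Rightarrow> real"
  assumes "finite P" "A \<subseteq> P"
    and refines: "\<And>x y. x \<in> P \<Longrightarrow> y \<in> P \<Longrightarrow> f0 x < f0 y \<Longrightarrow> f x < f y"
    and splits: "\<And>x y. x \<in> P \<Longrightarrow> y \<in> P \<Longrightarrow> x \<noteq> y \<Longrightarrow> f0 x = f0 y \<Longrightarrow> f x \<noteq> f y"
    and at_most_two: "\<And>x y z. x \<in> P \<Longrightarrow> y \<in> P \<Longrightarrow> z \<in> P \<Longrightarrow> x \<noteq> y \<Longrightarrow>
      f0 y = f0 x \<Longrightarrow> f0 z = f0 x \<Longrightarrow> z = x \<or> z = y"
    and closed: "\<And>x y. x \<in> A \<Longrightarrow> y \<in> P \<Longrightarrow> x \<noteq> y \<Longrightarrow> f0 y = f0 x \<Longrightarrow>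
      rank_above P f0 x + 1 = N \<Longrightarrow> y \<in> A"
  shows "(\<Sum>p\<in>A. top_weight P N f p) = (\<Sum>p\<in>A. top_weight P N f0 p)"
proof -
  have "(\<Sum>p\<in>A. top_weight P N f p) - (\<Sum>p\<in>A. top_weight P N f0 p) =
      (\<Sum>p\<in>A. \<Sum>q\<in>A. tie_shift P N f0 f p q)"
    unfolding sum_subtractf[symmetric]
    using top_weight_refine_eq_sum_tie_shift[OF assms(1,2) _ refines splits at_most_two closed]
    by (rule sum.cong[OF refl])
  also have "\<dots> = 0"
  proof (rule sum_sum_antisym_eq_zero)
    fix p q assume "p \<in> A" "q \<in> A"
    show "tie_shift P N f0 f q p = - tie_shift P N f0 f p q"
    proof (cases "boundary_tie P N f0 p q")
      case True
      then have "f q \<noteq> f p"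
        using splits \<open>p \<in> A\<close> \<open>q \<in> A\<close> assms(2) unfolding boundary_tie_def by blast
      then show ?thesis by (rule tie_shift_antisym)
    qed (simp add: tie_shift_def boundary_tie_sym)
  qed
  finally show ?thesis by simp
qed

lemma top_weight_boundary_pair:
  fixes f :: "point \<Rightarrow> real"
  assumes "finite P" "a \<in> P" "b \<in> P" "a \<noteq> b" "f b = f a" "p \<in> P"
    and pair: "\<And>x. x \<in> P \<Longrightarrow> f x = f a \<Longrightarrow> x = a \<or> x = b"
    and rank: "rank_above P f a + 1 = N"
  shows "top_weight P N f p =
    (if f a < f p then 1 else 0) + (if p = a then 1/2 else 0) + (if p = b then 1/2 else 0)"
proof -
  define G where "G = {x\<in>P. f a < f x}"
  have "finite G" "a \<notin> G" "b \<notin> G"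
    using assms(1,5) unfolding G_def by auto
  then have cardG: "card (insert a (insert b G)) = N + 1"
    using rank assms(4) unfolding rank_above_def G_def by simp
  consider "f a < f p" | "f p = f a" | "f p < f a" by linarith
  then show ?thesis
  proof cases
    case 1
    then have "{x\<in>P. f p \<le> f x} \<subseteq> G" unfolding G_def by auto
    then have "rank_atleast P f p \<le> card G"
      unfolding rank_atleast_def by (rule card_mono[OF \<open>finite G\<close>])
    then have "rank_atleast P f p \<le> N"
      using rank unfolding rank_above_def G_def by simp
    then show ?thesis using 1 assms(5) unfolding top_weight_def by auto
  next
    case 2
    then have "p = a \<or> p = b" using pair assms(6) by blast
    moreover have "{x\<in>P. f p \<le> f x} = insert a (insert b G)"
      using 2 pair assms(2,3,5) unfolding G_def by fastforce
    ultimately show ?thesis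
      using 2 rank cardG assms(4)
      unfolding top_weight_def rank_atleast_def rank_above_def G_def by auto
  next
    case 3
    then have sub: "insert a (insert b G) \<subseteq> {x\<in>P. f p < f x}"
      using assms(2,3,5) unfolding G_def by auto
    have "N + 1 \<le> rank_above P f p"
      using card_mono[OF _ sub] assms(1) cardG unfolding rank_above_def by simp
    moreover have "rank_above P f p \<le> rank_atleast P f p"
      unfolding rank_above_def rank_atleast_def by (rule card_mono) (use assms(1) in auto)
    ultimately show ?thesis
      using 3 assms(5) unfolding top_weight_def by auto
  qed
qed

lemma sum_top_weight_boundary_pair:
  fixes f :: "point \<Rightarrow> real"
  assumes "finite P" "A \<subseteq> P" "a \<in> A" "b \<in> A" "a \<noteq> b" "f b = f a"
    and pair: "\<And>x. x \<in> P \<Longrightarrow> f x = f a \<Longrightarrow> x = a \<or> x = b"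
    and rank: "rank_above P f a + 1 = N"
  shows "(\<Sum>p\<in>A. top_weight P N f p) = card {x\<in>A. f a < f x} + 1"
proof -
  have "finite A" using assms(1,2) by (rule rev_finite_subset)
  have "(\<Sum>p\<in>A. top_weight P N f p) = (\<Sum>p\<in>A.
      (if f a < f p then 1 else 0) + (if p = a then 1/2 else 0) + (if p = b then 1/2 else 0))"
    by (rule sum.cong[OF refl], rule top_weight_boundary_pair[OF assms(1) _ _ assms(5,6) _ pair rank])
      (use assms(2-4) in auto)
  also have "\<dots> = card {x\<in>A. f a < f x} + 1"
    using \<open>finite A\<close> assms(3-5) by (simp add: sum.distrib sum.If_cases Int_def)
  finally show ?thesis .
qed

section \<open>Level lines of a linear functional\<close>

definition dot :: "point \<Rightarrow> point \<Rightarrow> real" where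
  "dot u p = fst u * fst p + snd u * snd p"

lemma level_line_orient:
  assumes "u \<noteq> (0, 0)" "p \<noteq> q" "dot u q = dot u p"
  obtains \<mu> where "\<mu> \<noteq> 0" "\<And>x. dot u x - dot u p = \<mu> * orient p q x"
proof -
  define ex where "ex = fst q - fst p"
  define ey where "ey = snd q - snd p"
  define ux where "ux = fst u"
  define uy where "uy = snd u"
  have perp: "ux * ex + uy * ey = 0"
    using assms(3) unfolding dot_def ex_def ey_def ux_def uy_def by (simp add: algebra_simps)
  have E: "ex\<^sup>2 + ey\<^sup>2 \<noteq> 0"
    using assms(2) unfolding ex_def ey_def by (auto simp: sum_power2_eq_zero_iff prod_eq_iff)
  have dot_level: "dot u x - dot u p = (uy * ex - ux * ey) / (ex\<^sup>2 + ey\<^sup>2) * orient p q x" for x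
  proof -
    have "(dot u x - dot u p) * (ex\<^sup>2 + ey\<^sup>2) - (uy * ex - ux * ey) * orient p q x
        = (ux * ex + uy * ey) * (ex * (fst x - fst p) + ey * (snd x - snd p))"
      unfolding dot_def orient_def ex_def ey_def ux_def uy_def by algebra
    then have "(dot u x - dot u p) * (ex\<^sup>2 + ey\<^sup>2) = (uy * ex - ux * ey) * orient p q x"
      using perp by simp
    then show ?thesis using E by (simp add: field_simps)
  qed
  have "(ux\<^sup>2 + uy\<^sup>2) * (ex\<^sup>2 + ey\<^sup>2) = (ux * ex + uy * ey)\<^sup>2 + (uy * ex - ux * ey)\<^sup>2"
    by algebra
  moreover have "ux\<^sup>2 + uy\<^sup>2 > 0"
    using assms(1) unfolding ux_def uy_def by (auto simp: sum_power2_gt_zero_iff prod_eq_iff)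
  ultimately have "uy * ex - ux * ey \<noteq> 0"
    using E perp by (metis add_0 mult_eq_0_iff power_zero_numeral less_irrefl)
  then show ?thesis
    using E by (intro that[of "(uy * ex - ux * ey) / (ex\<^sup>2 + ey\<^sup>2)"] dot_level) simp
qed

lemma level_set_collinear:
  assumes "u \<noteq> (0, 0)" "dot u q = dot u p" "dot u x = dot u p"
  shows "orient p q x = 0"
proof (cases "p = q")
  case False
  then obtain \<mu> where "\<mu> \<noteq> 0" "dot u x - dot u p = \<mu> * orient p q x"
    using level_line_orient[OF assms(1) _ assms(2)] by metis
  then have "\<mu> * orient p q x = 0" using assms(3) by linarith
  then show ?thesis using \<open>\<mu> \<noteq> 0\<close> by simp
qed (simp add: orient_def)

lemma general_position_orient_nonzero:
  assumes "general_position P" "p \<in> P" "q \<in> P" "x \<in> P" "p \<noteq> q" "p \<noteq> x" "q \<noteq> x"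
  shows "orient p q x \<noteq> 0"
  using assms unfolding general_position_def collinear3_def by simp

lemma general_position_level_set:
  assumes "general_position P" "u \<noteq> (0, 0)" "p \<in> P" "q \<in> P" "x \<in> P" "p \<noteq> q"
    and "dot u q = dot u p" "dot u x = dot u p"
  shows "x = p \<or> x = q"
  using general_position_orient_nonzero[OF assms(1,3-6)] level_set_collinear[OF assms(2,7,8)]
  by blast

lemma level_line_sides:
  assumes "u \<noteq> (0, 0)" "p \<noteq> q" "dot u q = dot u p"
  shows "{left_side S p q, right_side S p q} =
    {{x\<in>S. dot u p < dot u x}, {x\<in>S. dot u x < dot u p}}"
proof -
  obtain \<mu> where \<mu>: "\<mu> \<noteq> 0" "\<And>x. dot u x - dot u p = \<mu> * orient p q x"
    using level_line_orient[OF assms] by metis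
  have sign: "dot u p < dot u x \<longleftrightarrow> 0 < \<mu> * orient p q x"
    "dot u x < dot u p \<longleftrightarrow> \<mu> * orient p q x < 0" for x
    using \<mu>(2)[of x] by linarith+
  show ?thesis
  proof (cases "\<mu> > 0")
    case True
    then show ?thesis
      unfolding left_side_def right_side_def sign
      by (simp add: zero_less_mult_iff mult_less_0_iff)
  next
    case False
    then have "\<mu> < 0" using \<mu>(1) by simp
    then show ?thesis
      unfolding left_side_def right_side_def sign
      by (simp add: zero_less_mult_iff mult_less_0_iff insert_commute)
  qed
qed

lemma level_pair_halving_line:
  assumes "finite P" "general_position P" "card P = 2 * N"
    and "p \<in> P" "q \<in> P" "p \<noteq> q" "u \<noteq> (0, 0)" "dot u q = dot u p"
    and rank: "rank_above P (dot u) p + 1 = N"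
  shows "halving_line P p q"
proof -
  define above where "above = {x\<in>P. dot u p < dot u x}"
  define below where "below = {x\<in>P. dot u x < dot u p}"
  have "P = above \<union> below \<union> {p, q}"
    using general_position_level_set[OF assms(2,7,4,5) _ assms(6,8)] assms(4,5,8)
    unfolding above_def below_def by (auto, metis linorder_neqE_linordered_idom)
  moreover have "finite above" "finite below"
    using assms(1) unfolding above_def below_def by auto
  moreover have "p \<notin> above \<union> below" "q \<notin> above \<union> below"
    using assms(8) unfolding above_def below_def by auto
  moreover have "above \<inter> below = {}"
    unfolding above_def below_def by auto
  ultimately have "card P = card above + card below + 2"
    using assms(6) by (simp add: card_Un_disjoint)
  moreover have "card above + 1 = N"
    using rank unfolding rank_above_def above_def .
  ultimately have "card ` {above, below} = {(card P - 2) div 2}"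
    using assms(3) by auto
  then have "card ` {left_side P p q, right_side P p q} = {(card P - 2) div 2}"
    using level_line_sides[OF assms(7,6,8)] unfolding above_def below_def by simp
  then show ?thesis
    unfolding halving_line_def using assms(4-6) by auto
qed

lemma orient_swap: "orient b a x = - orient a b x"
  unfolding orient_def by (simp add: algebra_simps)

lemma halving_line_sym: "halving_line P a b \<Longrightarrow> halving_line P b a"
  unfolding halving_line_def left_side_def right_side_def orient_swap[of b a] by auto

lemma sum_top_weight_halving_line:
  fixes f :: "point \<Rightarrow> real"
  assumes "finite P" "general_position P" "card P = 2 * N" "halving_line P a b"
    and "A \<subseteq> P" "a \<in> A" "b \<in> A"
    and level: "\<And>x. f x - f a = orient a b x"
  shows "(\<Sum>p\<in>A. top_weight P N f p) = card (left_side A a b) + 1"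
proof -
  have ab: "a \<in> P" "b \<in> P" "a \<noteq> b"
    using assms(4) unfolding halving_line_def by auto
  have above: "{x\<in>S. f a < f x} = left_side S a b" for S
    unfolding left_side_def using level by (metis diff_gt_0_iff_gt)
  have "f b = f a"
    using level[of b] unfolding orient_def by simp
  moreover have "x = a \<or> x = b" if "x \<in> P" "f x = f a" for x
    using general_position_orient_nonzero[OF assms(2) ab(1,2) that(1) ab(3)] level[of x] that(2)
    by auto
  moreover have "card {a, b} \<le> card P"
    using ab assms(1) by (intro card_mono) auto
  then have "rank_above P f a + 1 = N"
    using assms(3,4) ab(3) unfolding rank_above_def above halving_line_def by simp
  ultimately show ?thesis
    using sum_top_weight_boundary_pair[OF assms(1,5-7) ab(3)] above by simp
qed

section \<open>Rotating the direction\<close>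

text \<open>The normal (- snd d, fst d) of d, rotated by the angle t: heights in the direction
  sweep_dir d 0 increase to the left of d, those in the direction sweep_dir d pi to the right.\<close>
definition sweep_dir :: "point \<Rightarrow> real \<Rightarrow> point" where
  "sweep_dir d t = (sin t * fst d - cos t * snd d, sin t * snd d + cos t * fst d)"

lemma sweep_dir_nonzero:
  assumes "d \<noteq> (0, 0)"
  shows "sweep_dir d t \<noteq> (0, 0)"
proof
  assume "sweep_dir d t = (0, 0)"
  moreover have "(sin t * fst d - cos t * snd d)\<^sup>2 + (sin t * snd d + cos t * fst d)\<^sup>2
      = ((sin t)\<^sup>2 + (cos t)\<^sup>2) * ((fst d)\<^sup>2 + (snd d)\<^sup>2)"
    by algebra
  ultimately have "(fst d)\<^sup>2 + (snd d)\<^sup>2 = 0"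
    unfolding sweep_dir_def by simp
  then show False
    using assms by (simp add: sum_power2_eq_zero_iff prod_eq_iff)
qed

lemma dot_sweep_dir_rotate:
  "dot (sweep_dir d t) p =
     cos (t - t0) * dot (sweep_dir d t0) p + sin (t - t0) * dot (sweep_dir d (t0 + pi / 2)) p"
proof -
  have "t = (t - t0) + t0" by simp
  then have "dot (sweep_dir d t) p = dot (sweep_dir d ((t - t0) + t0)) p" by simp
  then show ?thesis
    unfolding dot_def sweep_dir_def sin_add cos_add by (simp add: algebra_simps)
qed

lemma dot_eq_independent_imp_eq:
  assumes "dot u q = dot u p" "dot v q = dot v p" "fst u * snd v - snd u * fst v \<noteq> 0"
  shows "q = p"
proof -
  define ex where "ex = fst q - fst p"
  define ey where "ey = snd q - snd p"
  have u: "fst u * ex + snd u * ey = 0" and v: "fst v * ex + snd v * ey = 0"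
    using assms(1,2) unfolding dot_def ex_def ey_def by (simp_all add: algebra_simps)
  have "(fst u * snd v - snd u * fst v) * ex =
      snd v * (fst u * ex + snd u * ey) - snd u * (fst v * ex + snd v * ey)"
    "(fst u * snd v - snd u * fst v) * ey =
      fst u * (fst v * ex + snd v * ey) - fst v * (fst u * ex + snd u * ey)"
    by algebra+
  then have "(fst u * snd v - snd u * fst v) * ex = 0" "(fst u * snd v - snd u * fst v) * ey = 0"
    by (simp_all only: u v mult_zero_right diff_self)
  then have "ex = 0" "ey = 0" using assms(3) by simp_all
  then show ?thesis unfolding ex_def ey_def by (simp add: prod_eq_iff)
qed

lemma sweep_dir_quarter_turn_det:
  "fst (sweep_dir d t) * snd (sweep_dir d (t + pi / 2)) - snd (sweep_dir d t) * fst (sweep_dir d (t + pi / 2))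
    = - ((fst d)\<^sup>2 + (snd d)\<^sup>2)"
proof -
  have "(sin t * fst d - cos t * snd d) * (cos t * snd d - sin t * fst d)
      - (sin t * snd d + cos t * fst d) * (cos t * fst d + sin t * snd d)
      = - ((sin t)\<^sup>2 + (cos t)\<^sup>2) * ((fst d)\<^sup>2 + (snd d)\<^sup>2)"
    by algebra
  then show ?thesis unfolding sweep_dir_def sin_add cos_add by simp
qed

lemma sweep_tie_broken:
  assumes "d \<noteq> (0, 0)" "p \<noteq> q" "dot (sweep_dir d t0) q = dot (sweep_dir d t0) p"
    and "t \<noteq> t0" "\<bar>t - t0\<bar> < pi"
  shows "dot (sweep_dir d t) q \<noteq> dot (sweep_dir d t) p"
proof -
  have "(fst d)\<^sup>2 + (snd d)\<^sup>2 > 0"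
    using assms(1) by (simp add: sum_power2_gt_zero_iff prod_eq_iff)
  then have "fst (sweep_dir d t0) * snd (sweep_dir d (t0 + pi / 2))
      - snd (sweep_dir d t0) * fst (sweep_dir d (t0 + pi / 2)) \<noteq> 0"
    using sweep_dir_quarter_turn_det[of d t0] by linarith
  then have "dot (sweep_dir d (t0 + pi / 2)) q \<noteq> dot (sweep_dir d (t0 + pi / 2)) p"
    using dot_eq_independent_imp_eq[OF assms(3)] assms(2) by blast
  moreover have "sin (t - t0) \<noteq> 0"
    using assms(4,5) sin_zero_pi_iff by simp
  ultimately show ?thesis
    using assms(3) dot_sweep_dir_rotate[of d t q t0] dot_sweep_dir_rotate[of d t p t0] by simp
qed

lemma sweep_sum_top_weight_locally_constant:
  assumes "finite P" "A \<subseteq> P" "general_position P" "card P = 2 * N" "d \<noteq> (0, 0)"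
    and closed: "\<And>x y. halving_line P x y \<Longrightarrow> x \<in> A \<Longrightarrow> y \<in> A"
  shows "\<forall>\<^sub>F t in at t0. (\<Sum>p\<in>A. top_weight P N (dot (sweep_dir d t0)) p) =
                        (\<Sum>p\<in>A. top_weight P N (dot (sweep_dir d t)) p)"
proof -
  define f where "f t = dot (sweep_dir d t)" for t
  have order: "\<forall>\<^sub>F t in at t0. \<forall>x\<in>P. \<forall>y\<in>P. f t0 x < f t0 y \<longrightarrow> f t x < f t y"
  proof (intro eventually_ball_finite[OF assms(1)] ballI)
    fix x y
    have "((\<lambda>t. f t y - f t x) \<longlongrightarrow> f t0 y - f t0 x) (at t0)"
      unfolding f_def dot_def sweep_dir_def by (intro tendsto_intros)
    then show "\<forall>\<^sub>F t in at t0. f t0 x < f t0 y \<longrightarrow> f t x < f t y"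
      by (cases "f t0 x < f t0 y") (auto dest: order_tendstoD(1)[of _ _ _ 0] elim: eventually_mono)
  qed
  have ties: "\<forall>\<^sub>F t in at t0. \<forall>x\<in>P. \<forall>y\<in>P. x \<noteq> y \<longrightarrow> f t0 x = f t0 y \<longrightarrow> f t x \<noteq> f t y"
    unfolding eventually_at
    using sweep_tie_broken[OF assms(5)] pi_gt_zero unfolding f_def dist_real_def by metis
  show ?thesis
    using order ties
  proof eventually_elim
    case (elim t)
    show ?case
      unfolding f_def[symmetric]
    proof (rule sum_top_weight_refine[OF assms(1,2), THEN sym])
      show "f t x < f t y" if "x \<in> P" "y \<in> P" "f t0 x < f t0 y" for x y
        using elim that by blast
      show "f t x \<noteq> f t y" if "x \<in> P" "y \<in> P" "x \<noteq> y" "f t0 x = f t0 y" for x y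
        using elim that by blast
      show "z = x \<or> z = y"
        if "x \<in> P" "y \<in> P" "z \<in> P" "x \<noteq> y" "f t0 y = f t0 x" "f t0 z = f t0 x" for x y z
        using general_position_level_set[OF assms(3) sweep_dir_nonzero[OF assms(5)]] that
        unfolding f_def by blast
      show "y \<in> A" if "x \<in> A" "y \<in> P" "x \<noteq> y" "f t0 y = f t0 x"
        and "rank_above P (f t0) x + 1 = N" for x y
        using level_pair_halving_line[OF assms(1,3,4) _ that(2,3) sweep_dir_nonzero[OF assms(5)]]
          that assms(2) closed unfolding f_def by blast
    qed
  qed
qed

lemma union_of_components_closed:
  assumes "C \<subseteq> ug_components P" "x \<in> \<Union>C" "halving_line P x y"
  shows "y \<in> \<Union>C"
proof -
  obtain v where "v \<in> P" "ug_component P v \<in> C" "x \<in> ug_component P v"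
    using assms(1,2) unfolding ug_components_def by blast
  moreover have "(ug_adj P)\<^sup>*\<^sup>* x y" "y \<in> P"
    using assms(3) unfolding ug_adj_def halving_line_def by auto
  ultimately have "y \<in> ug_component P v"
    unfolding ug_component_def by (auto intro: rtranclp_trans)
  then show ?thesis using \<open>ug_component P v \<in> C\<close> by blast
qed

theorem mainTheorem2:
  fixes P A :: "point set" and a b :: point
  assumes "finite P"
    and "general_position P"
    and "even (card P)"
    and "\<exists>C \<subseteq> ug_components P. A = \<Union>C"
    and "a \<in> A" and "b \<in> A"
    and "halving_line P a b"
  shows "card (left_side A a b) = card (right_side A a b)"
proof -
  obtain C where C: "C \<subseteq> ug_components P" "A = \<Union>C" using assms(4) by blast
  have "A \<subseteq> P" using C unfolding ug_components_def ug_component_def by auto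
  define N where "N = card P div 2"
  have N: "card P = 2 * N" using assms(3) unfolding N_def by simp
  define d where "d = (fst b - fst a, snd b - snd a)"
  have "d \<noteq> (0, 0)" using assms(7) unfolding d_def halving_line_def by (auto simp: prod_eq_iff)
  define F where "F t = (\<Sum>p\<in>A. top_weight P N (dot (sweep_dir d t)) p)" for t
  have "\<forall>\<^sub>F s in at t. F t = F s" for t
    unfolding F_def
    by (rule sweep_sum_top_weight_locally_constant[OF assms(1) \<open>A \<subseteq> P\<close> assms(2) N \<open>d \<noteq> (0, 0)\<close>])
      (use union_of_components_closed[OF C(1)] C(2) in blast)
  then have "F 0 = F pi"
    by (intro connected_local_const[OF connected_UNIV, of 0 pi F]) auto
  moreover have "F 0 = card (left_side A a b) + 1"
    unfolding F_def using assms(1,2,7,5,6) N \<open>A \<subseteq> P\<close>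
    by (intro sum_top_weight_halving_line) (auto simp: d_def dot_def sweep_dir_def orient_def algebra_simps)
  moreover have "F pi = card (left_side A b a) + 1"
    unfolding F_def using assms(1,2,6,5) N \<open>A \<subseteq> P\<close> halving_line_sym[OF assms(7)]
    by (intro sum_top_weight_halving_line) (auto simp: d_def dot_def sweep_dir_def orient_def algebra_simps)
  moreover have "left_side A b a = right_side A a b"
    unfolding left_side_def right_side_def orient_swap[of b a] by auto
  ultimately show ?thesis by simp
qed

end
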